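(* There is a constant $C_5>0$ depending only on $d,s,\alpha,\Lambda$ such that for every $\Lambda$-nice measure $\mu$ on $\mathbb{R}^d$ and every $A>10\sqrt d$, the family $\Psi^\mu_{Q,A}$ $(Q\in\mathcal{D})$ is a $C_5A^{d+2+\frac{3s}{2}}$-Riesz family.
   Context: $d\ge2$, $s\in(0,d)$. A measure $\mu$ (nonnegative locally finite Borel) is $\Lambda$-nice if $\mu(B(x,r))\le\Lambda r^s$ for all balls. $\mathcal{D}$ is the lattice of half-open dyadic cubes in $\mathbb{R}^d$; $\ell(Q)$ is the side length and $x_Q$ the centre of $Q$. For $A>10\sqrt d$, $\Psi^\mu_{Q,A}$ is the set of Lipschitz functions $\psi$ compactly supported in $B(x_Q,A\ell(Q))$ with $\int\psi\,d\mu=0$ and Lipschitz constant $<\ell(Q)^{-1-s/2}$. A sequence $(\psi_Q)_{Q\in\mathcal{D}}$ is a $C$-Riesz system (in $L^2(\mu)$) if $\|\sum_Q a_Q\psi_Q\|_{L^2(\mu)}^2\le C\sum_Q|a_Q|^2$ for every $(a_Q)\in\ell^2(\mathcal{D})$. A family of sets $(\Psi_Q)_{Q\in\mathcal D}$ is a $C$-Riesz family if every choice $\psi_Q\in\Psi_Q$ gives a $C$-Riesz system. *)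

theory Defs
  imports "HOL-Analysis.Analysis" "HOL-Probability.Probability"
begin

text \<open>Dyadic cubes in R^d (d = CARD('n)), indexed by generation k and integer
  translation vector j: Q(k,j) = prod_i [j_i 2^-k, (j_i+1) 2^-k).  The map
  (k,j) to Q(k,j) is a bijection onto the dyadic lattice D.\<close>

type_synonym 'n dyadic_index = "int \<times> ('n \<Rightarrow> int)"

definition dyadic_cube :: "'n::finite dyadic_index \<Rightarrow> (real^'n) set" where
  "dyadic_cube Q = {x. \<forall>i. real_of_int (snd Q i) * 2 powr (- real_of_int (fst Q)) \<le> x$i
                          \<and> x$i < (real_of_int (snd Q i) + 1) * 2 powr (- real_of_int (fst Q))}"

definition dyadic_cubes :: "(real^'n::finite) set set" where
  "dyadic_cubes = range dyadic_cube"

definition side_len :: "'n::finite dyadic_index \<Rightarrow> real" where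
  "side_len Q = 2 powr (- real_of_int (fst Q))"

definition centre :: "'n::finite dyadic_index \<Rightarrow> real^'n" where
  "centre Q = (\<chi> i. (real_of_int (snd Q i) + 1/2) * side_len Q)"

definition nice_measure :: "real \<Rightarrow> real \<Rightarrow> (real^'n::finite) measure \<Rightarrow> bool" where
  "nice_measure s \<Lambda> \<mu> \<longleftrightarrow>
     sets \<mu> = sets borel
     \<and> (\<forall>x. \<exists>r>0. emeasure \<mu> (ball x r) < \<infinity>)
     \<and> (\<forall>x r. r > 0 \<longrightarrow> emeasure \<mu> (ball x r) \<le> ennreal (\<Lambda> * r powr s))"

definition Psi :: "real \<Rightarrow> (real^'n::finite) measure \<Rightarrow> real \<Rightarrow> 'n dyadic_index
                     \<Rightarrow> (real^'n \<Rightarrow> real) set" where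
  "Psi s \<mu> A Q = {\<psi>.
      (\<exists>L. L < side_len Q powr (-1 - s/2) \<and> L-lipschitz_on UNIV \<psi>)
    \<and> (\<exists>K. compact K \<and> K \<subseteq> ball (centre Q) (A * side_len Q) \<and> (\<forall>x. x \<notin> K \<longrightarrow> \<psi> x = 0))
    \<and> integral\<^sup>L \<mu> \<psi> = 0}"

text \<open>C-Riesz system: for every square-summable (a_Q), the norm in L^2(mu) of
  the sum is bounded by C sum |a_Q|^2; the sum is understood as the L^2 limit of
  its finite partial sums, so we require the bound for every finite partial sum.\<close>

definition riesz_system :: "real \<Rightarrow> (real^'n::finite) measure
                              \<Rightarrow> ('n dyadic_index \<Rightarrow> real^'n \<Rightarrow> real) \<Rightarrow> bool" where
  "riesz_system C \<mu> \<psi> \<longleftrightarrow>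
     (\<forall>a :: 'n dyadic_index \<Rightarrow> real. (\<lambda>Q. (a Q)\<^sup>2) summable_on UNIV \<longrightarrow>
        (\<forall>F. finite F \<longrightarrow>
           (\<integral>\<^sup>+ x. ennreal ((\<Sum>Q\<in>F. a Q * \<psi> Q x)\<^sup>2) \<partial>\<mu>)
             \<le> ennreal (C * (\<Sum>\<^sub>\<infinity>Q. (a Q)\<^sup>2))))"

definition riesz_family :: "real \<Rightarrow> (real^'n::finite) measure
                              \<Rightarrow> ('n dyadic_index \<Rightarrow> (real^'n \<Rightarrow> real) set) \<Rightarrow> bool" where
  "riesz_family C \<mu> \<Psi> \<longleftrightarrow> (\<forall>\<psi>. (\<forall>Q. \<psi> Q \<in> \<Psi> Q) \<longrightarrow> riesz_system C \<mu> \<psi>)"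

end

theory Submission
  imports Defs
begin

text \<open>Schur's test with the weights \<open>\<ell>(Q)^(s/2)\<close>.  For \<open>\<ell>(R) \<le> \<ell>(Q)\<close>, the mean-zero
  property of \<open>\<psi>\<^sub>R\<close> allows replacing \<open>\<psi>\<^sub>Q\<close> by \<open>\<psi>\<^sub>Q - \<psi>\<^sub>Q(x\<^sub>R)\<close>, which the Lipschitz bound
  makes of size \<open>\<ell>(Q)^(-1-s/2) A \<ell>(R)\<close> on the support of \<open>\<psi>\<^sub>R\<close>; hence
  \<open>|\<langle>\<psi>\<^sub>Q, \<psi>\<^sub>R\<rangle>| \<le> 2A\<^sup>2 \<ell>(Q)^(-1-s/2) \<ell>(R)^(1-s/2) \<mu>(B(x\<^sub>R, A\<ell>(R)))\<close>.  Within one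
  generation the interacting balls overlap at most \<open>(2A+1)^d\<close> times inside \<open>B(x\<^sub>Q, 3A\<ell>(Q))\<close>, a
  ball of measure \<open>\<le> \<Lambda>(3A\<ell>(Q))^s\<close>, so the generation \<open>k\<close> contributes to the weighted row sum at most
  a constant times \<open>2^(-|k - k\<^sub>Q|)\<close>; the row sums are therefore uniformly bounded.\<close>

lemma card_ceiling_floor_interval_le:
  fixes a b :: real
  assumes "a \<le> b"
  shows "real (card {\<lceil>a\<rceil>..\<lfloor>b\<rfloor>}) \<le> b - a + 1"
proof -
  have "real (card {\<lceil>a\<rceil>..\<lfloor>b\<rfloor>}) = real (nat (\<lfloor>b\<rfloor> - \<lceil>a\<rceil> + 1))" by simp
  also have "\<dots> \<le> b - a + 1"
  proof (cases "\<lfloor>b\<rfloor> - \<lceil>a\<rceil> + 1 \<ge> 0")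
    case True
    hence "real (nat (\<lfloor>b\<rfloor> - \<lceil>a\<rceil> + 1)) = real_of_int (\<lfloor>b\<rfloor> - \<lceil>a\<rceil> + 1)" by simp
    also have "\<dots> \<le> b - a + 1" using of_int_floor_le[of b] le_of_int_ceiling[of a]
      by (simp only: of_int_add of_int_diff of_int_1)
    finally show ?thesis .
  next
    case False thus ?thesis using assms by simp
  qed
  finally show ?thesis .
qed

lemma dyadic_centres_in_ball:
  fixes x :: "real^'n::finite" and k :: int and r :: real
  assumes r: "r > 0"
  shows "finite {j::'n\<Rightarrow>int. dist (centre (k,j)) x < r}"
    and "real (card {j::'n\<Rightarrow>int. dist (centre (k,j)) x < r})
           \<le> (2 * r / 2 powr (- real_of_int k) + 1) ^ CARD('n)"
proof -
  define l where "l = (2::real) powr (- real_of_int k)"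
  have l: "l > 0" unfolding l_def by simp
  define S where "S i = {\<lceil>(x$i - r)/l - 1/2\<rceil>..\<lfloor>(x$i + r)/l - 1/2\<rfloor>}" for i
  have sub: "{j::'n\<Rightarrow>int. dist (centre (k,j)) x < r} \<subseteq> PiE UNIV S"
  proof
    fix j :: "'n \<Rightarrow> int" assume "j \<in> {j::'n\<Rightarrow>int. dist (centre (k,j)) x < r}"
    hence d: "dist (centre (k,j)) x < r" by simp
    have "j i \<in> S i" for i
    proof -
      have "\<bar>(centre (k,j) - x)$i\<bar> \<le> norm (centre (k,j) - x)" by (rule component_le_norm_cart)
      hence "\<bar>(real_of_int (j i) + 1/2) * l - x$i\<bar> < r"
        using d by (simp add: centre_def side_len_def l_def dist_norm)
      hence "(x$i - r)/l - 1/2 < j i" and "j i < (x$i + r)/l - 1/2"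
        using l by (auto simp: field_simps abs_less_iff)
      thus ?thesis unfolding S_def by (simp add: ceiling_le_iff le_floor_iff less_imp_le)
    qed
    thus "j \<in> PiE UNIV S" by auto
  qed
  have fin: "finite (PiE UNIV S)" by (intro finite_PiE) (auto simp: S_def)
  show "finite {j::'n\<Rightarrow>int. dist (centre (k,j)) x < r}" using finite_subset[OF sub fin] .
  have "real (card {j::'n\<Rightarrow>int. dist (centre (k,j)) x < r}) \<le> real (card (PiE UNIV S))"
    using card_mono[OF fin sub] by simp
  also have "\<dots> = (\<Prod>i\<in>UNIV. real (card (S i)))" by (simp add: card_PiE)
  also have "\<dots> \<le> (\<Prod>i\<in>(UNIV::'n set). 2 * r / l + 1)"
  proof (rule prod_mono)
    fix i :: 'n
    have "(x$i - r)/l - 1/2 \<le> (x$i + r)/l - 1/2" using l r by (simp add: divide_right_mono)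
    hence "real (card (S i)) \<le> ((x$i + r)/l - 1/2) - ((x$i - r)/l - 1/2) + 1"
      unfolding S_def by (rule card_ceiling_floor_interval_le)
    also have "\<dots> = 2 * r / l + 1" using l by (simp add: field_simps)
    finally show "0 \<le> real (card (S i)) \<and> real (card (S i)) \<le> 2 * r / l + 1" by simp
  qed
  finally show "real (card {j::'n\<Rightarrow>int. dist (centre (k,j)) x < r})
           \<le> (2 * r / 2 powr (- real_of_int k) + 1) ^ CARD('n)" by (simp add: l_def)
qed

lemma dyadic_generation_near_point:
  fixes S :: "'n::finite dyadic_index set"
  assumes a: "a > 0"
    and S: "\<And>R. R \<in> S \<Longrightarrow> fst R = k \<and> dist (centre R) x < a * 2 powr (- real_of_int k)"
  shows "real (card S) \<le> (2 * a + 1) ^ CARD('n)"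
proof -
  define r where "r = a * 2 powr (- real_of_int k)"
  have r: "r > 0" using a by (simp add: r_def)
  let ?J = "{j::'n\<Rightarrow>int. dist (centre (k,j)) x < r}"
  have sub: "S \<subseteq> Pair k ` ?J"
  proof
    fix R assume R: "R \<in> S"
    obtain j where j: "R = (k, j)" using S[OF R] by (cases R) auto
    show "R \<in> Pair k ` ?J"
      by (intro image_eqI[where x = j]) (use S[OF R] j in \<open>auto simp: r_def\<close>)
  qed
  have fin: "finite (Pair k ` ?J)" using finite_imageI[OF dyadic_centres_in_ball(1)[OF r]] .
  have "card S \<le> card ?J"
    using card_mono[OF fin sub] card_image_le[OF dyadic_centres_in_ball(1)[OF r, of k x], of "Pair k"]
    by linarith
  moreover have "2 * r / 2 powr (- real_of_int k) + 1 = 2 * a + 1" by (simp add: r_def)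
  ultimately show ?thesis
    using dyadic_centres_in_ball(2)[OF r, of k x] by simp
qed

lemma sum_two_powr_neg_abs_diff_le:
  fixes S :: "int set" assumes fin: "finite S"
  shows "(\<Sum>k\<in>S. (2::real) powr (- \<bar>real_of_int (k - k0)\<bar>)) \<le> 4"
proof -
  let ?f = "\<lambda>k. (2::real) powr (- \<bar>real_of_int (k - k0)\<bar>)"
  have half: "sum ?f T \<le> 2" if T: "finite T" "inj_on (\<lambda>k. nat \<bar>k - k0\<bar>) T" for T
  proof -
    have "?f k = (1/2) ^ nat \<bar>k - k0\<bar>" for k
    proof -
      have "?f k = inverse (2 powr real (nat \<bar>k - k0\<bar>))" by (simp add: powr_minus)
      also have "\<dots> = (1/2) ^ nat \<bar>k - k0\<bar>"
        by (simp only: powr_realpow[of 2] power_one_over) (simp add: divide_inverse)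
      finally show ?thesis .
    qed
    hence "sum ?f T = (\<Sum>n\<in>(\<lambda>k. nat \<bar>k - k0\<bar>) ` T. (1/2) ^ n)"
      by (simp add: sum.reindex[OF T(2)])
    also have "\<dots> \<le> (\<Sum>n. (1/2::real) ^ n)"
      by (rule sum_le_suminf) (use T in \<open>auto intro: summable_geometric\<close>)
    also have "\<dots> = 2" by (subst suminf_geometric) auto
    finally show ?thesis .
  qed
  have "sum ?f S = sum ?f {k\<in>S. k0 \<le> k} + sum ?f {k\<in>S. k < k0}"
    by (subst sum.union_disjoint[symmetric]) (use fin in \<open>auto intro!: sum.cong\<close>)
  also have "\<dots> \<le> 2 + 2"
    by (intro add_mono half) (use fin in \<open>auto simp: inj_on_def\<close>)
  finally show ?thesis by simp
qed

lemma abs_mult_le_weighted_squares: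
  fixes x y r :: real assumes "r > 0"
  shows "\<bar>x\<bar> * \<bar>y\<bar> \<le> (x\<^sup>2 * r + y\<^sup>2 / r) / 2"
proof -
  have "0 \<le> (\<bar>x\<bar> * r - \<bar>y\<bar>)\<^sup>2" by simp
  hence "2 * (\<bar>x\<bar> * \<bar>y\<bar>) * r \<le> (x\<^sup>2 * r + y\<^sup>2 / r) * r"
    using assms by (simp add: power2_eq_square algebra_simps)
  thus ?thesis using assms by simp
qed

lemma schur_test:
  fixes G :: "'a \<Rightarrow> 'a \<Rightarrow> real" and h a :: "'a \<Rightarrow> real"
  assumes fin: "finite F" and sym: "\<And>Q R. G Q R = G R Q" and h: "\<And>Q. h Q > 0"
    and row: "\<And>Q. Q \<in> F \<Longrightarrow> (\<Sum>R\<in>F. \<bar>G Q R\<bar> * (h R / h Q)) \<le> M"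
  shows "(\<Sum>Q\<in>F. \<Sum>R\<in>F. a Q * a R * G Q R) \<le> M * (\<Sum>Q\<in>F. (a Q)\<^sup>2)"
proof -
  let ?w = "\<lambda>Q R. h R / h Q"
  have "(\<Sum>Q\<in>F. \<Sum>R\<in>F. a Q * a R * G Q R) \<le> (\<Sum>Q\<in>F. \<Sum>R\<in>F. \<bar>a Q\<bar> * \<bar>a R\<bar> * \<bar>G Q R\<bar>)"
    by (intro sum_mono) (metis abs_ge_self abs_mult)
  also have "\<dots> \<le> (\<Sum>Q\<in>F. \<Sum>R\<in>F. ((a Q)\<^sup>2 * ?w Q R + (a R)\<^sup>2 * ?w R Q) / 2 * \<bar>G Q R\<bar>)"
  proof (intro sum_mono mult_right_mono)
    fix Q R
    have "?w R Q = 1 / ?w Q R" by simp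
    thus "\<bar>a Q\<bar> * \<bar>a R\<bar> \<le> ((a Q)\<^sup>2 * ?w Q R + (a R)\<^sup>2 * ?w R Q) / 2"
      using abs_mult_le_weighted_squares[of "?w Q R" "a Q" "a R"] h[of Q] h[of R] by simp
  qed simp
  also have "\<dots> = (\<Sum>Q\<in>F. \<Sum>R\<in>F. (a Q)\<^sup>2 * ?w Q R * \<bar>G Q R\<bar>) / 2
                 + (\<Sum>Q\<in>F. \<Sum>R\<in>F. (a R)\<^sup>2 * ?w R Q * \<bar>G Q R\<bar>) / 2"
    by (simp add: sum.distrib sum_divide_distrib add_divide_distrib distrib_right)
  also have "(\<Sum>Q\<in>F. \<Sum>R\<in>F. (a R)\<^sup>2 * ?w R Q * \<bar>G Q R\<bar>)
      = (\<Sum>Q\<in>F. \<Sum>R\<in>F. (a Q)\<^sup>2 * ?w Q R * \<bar>G Q R\<bar>)"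
    by (subst sum.swap) (simp add: sym)
  also have "(\<Sum>Q\<in>F. \<Sum>R\<in>F. (a Q)\<^sup>2 * ?w Q R * \<bar>G Q R\<bar>)
      = (\<Sum>Q\<in>F. (a Q)\<^sup>2 * (\<Sum>R\<in>F. \<bar>G Q R\<bar> * ?w Q R))"
    by (simp add: sum_distrib_left algebra_simps)
  also have "\<dots> \<le> (\<Sum>Q\<in>F. (a Q)\<^sup>2 * M)"
    by (intro sum_mono mult_left_mono row) auto
  finally show ?thesis by (simp add: sum_distrib_left mult.commute)
qed

lemma side_len_pos: "side_len Q > 0"
  by (simp add: side_len_def)

lemma side_len_le_iff: "side_len R \<le> side_len Q \<longleftrightarrow> fst Q \<le> fst R"
  by (simp add: side_len_def)

lemma side_len_ratio: "side_len R / side_len Q = 2 powr (- real_of_int (fst R - fst Q))"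
  unfolding side_len_def by (simp add: powr_diff[symmetric])

lemma nice_measure_space: "nice_measure s \<Lambda> \<mu> \<Longrightarrow> space \<mu> = UNIV"
  unfolding nice_measure_def using sets_eq_imp_space_eq[of \<mu> borel] by simp

lemma nice_measure_ball_finite:
  assumes "nice_measure s \<Lambda> \<mu>" "r > 0"
  shows "emeasure \<mu> (ball x r) < \<infinity>"
proof -
  have "emeasure \<mu> (ball x r) \<le> ennreal (\<Lambda> * r powr s)"
    using assms unfolding nice_measure_def by blast
  also have "\<dots> < \<infinity>" by simp
  finally show ?thesis .
qed

lemma nice_measure_ball_le:
  assumes nice: "nice_measure s \<Lambda> \<mu>" and r: "r > 0" and \<Lambda>: "\<Lambda> \<ge> 0"
  shows "measure \<mu> (ball x r) \<le> \<Lambda> * r powr s"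
proof -
  have "emeasure \<mu> (ball x r) = ennreal (measure \<mu> (ball x r))"
    using nice_measure_ball_finite[OF nice r, of x] by (intro emeasure_eq_ennreal_measure) (simp add: less_top)
  moreover have "emeasure \<mu> (ball x r) \<le> ennreal (\<Lambda> * r powr s)"
    using nice r unfolding nice_measure_def by blast
  ultimately show ?thesis using \<Lambda> by simp
qed

lemma integrable_ball_indicator:
  assumes "nice_measure s \<Lambda> \<mu>" "r > 0"
  shows "integrable \<mu> (indicator (ball c r) :: _ \<Rightarrow> real)"
  using nice_measure_ball_finite[OF assms] assms(1)
  by (intro integrable_real_indicator) (auto simp: nice_measure_def)

lemma integrable_continuous_bounded_support:
  fixes f :: "real^'n::finite \<Rightarrow> real"
  assumes nice: "nice_measure s \<Lambda> \<mu>" and cont: "continuous_on UNIV f" and r: "r > 0"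
    and bound: "\<And>x. \<bar>f x\<bar> \<le> B" and supp: "\<And>x. f x \<noteq> 0 \<Longrightarrow> dist c x < r"
  shows "integrable \<mu> f"
proof (rule Bochner_Integration.integrable_bound)
  show "integrable \<mu> (\<lambda>x. B * indicator (ball c r) x)"
    using integrable_ball_indicator[OF nice r] by simp
  have "f \<in> borel_measurable borel" using cont by (rule borel_measurable_continuous_onI)
  thus "f \<in> borel_measurable \<mu>"
    using nice measurable_cong_sets unfolding nice_measure_def by blast
  have "B \<ge> 0" using bound[of c] by linarith
  thus "AE x in \<mu>. norm (f x) \<le> norm (B * indicator (ball c r) x)"
    using bound supp by (intro AE_I2) (fastforce simp: indicator_def)
qed

lemma sum_measure_generation_balls_le:
  fixes S :: "'n::finite dyadic_index set"
  assumes nice: "nice_measure s \<Lambda> \<mu>" and fin: "finite S" and gen: "\<And>R. R \<in> S \<Longrightarrow> fst R = k"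
    and a: "a > 0" and \<rho>: "\<rho> > 0"
    and sub: "\<And>R. R \<in> S \<Longrightarrow> ball (centre R) (a * side_len R) \<subseteq> ball c \<rho>"
  shows "(\<Sum>R\<in>S. measure \<mu> (ball (centre R) (a * side_len R)))
          \<le> (2 * a + 1) ^ CARD('n) * measure \<mu> (ball c \<rho>)"
proof -
  let ?B = "\<lambda>R. ball (centre R) (a * side_len R)"
  have int_B: "integrable \<mu> (indicator (?B R) :: _ \<Rightarrow> real)" for R
    using integrable_ball_indicator[OF nice] a side_len_pos[of R] by simp
  have "(\<Sum>R\<in>S. measure \<mu> (?B R)) = integral\<^sup>L \<mu> (\<lambda>x. \<Sum>R\<in>S. indicator (?B R) x)"
    using int_B nice_measure_space[OF nice] by (subst Bochner_Integration.integral_sum) auto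
  also have "\<dots> \<le> integral\<^sup>L \<mu> (\<lambda>x. (2 * a + 1) ^ CARD('n) * indicator (ball c \<rho>) x)"
  proof (rule integral_mono)
    show "integrable \<mu> (\<lambda>x. \<Sum>R\<in>S. indicator (?B R) x :: real)"
      using int_B by auto
    show "integrable \<mu> (\<lambda>x. (2 * a + 1) ^ CARD('n) * indicator (ball c \<rho>) x :: real)"
      using integrable_ball_indicator[OF nice \<rho>] by auto
    fix x
    have "(\<Sum>R\<in>S. indicator (?B R) x :: real) = real (card {R\<in>S. x \<in> ?B R})"
      unfolding indicator_def using fin by (simp add: Int_def)
    also have "\<dots> \<le> (2 * a + 1) ^ CARD('n)"
      using gen by (intro dyadic_generation_near_point[OF a]) (auto simp: side_len_def)
    finally have count: "(\<Sum>R\<in>S. indicator (?B R) x :: real) \<le> (2 * a + 1) ^ CARD('n)" .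
    show "(\<Sum>R\<in>S. indicator (?B R) x) \<le> (2 * a + 1) ^ CARD('n) * (indicator (ball c \<rho>) x :: real)"
    proof (cases "x \<in> ball c \<rho>")
      case False
      hence "\<forall>R\<in>S. x \<notin> ?B R" using sub by blast
      thus ?thesis using False by simp
    qed (use count in simp)
  qed
  also have "\<dots> = (2 * a + 1) ^ CARD('n) * measure \<mu> (ball c \<rho>)"
    using nice_measure_space[OF nice] by simp
  finally show ?thesis .
qed

lemma Psi_memD:
  fixes \<psi> :: "real^'n::finite \<Rightarrow> real"
  assumes \<psi>: "\<psi> \<in> Psi s \<mu> A Q" and A: "A > 0"
  shows Psi_support: "\<And>x. \<psi> x \<noteq> 0 \<Longrightarrow> dist (centre Q) x < A * side_len Q"
    and Psi_lipschitz: "\<And>x y. \<bar>\<psi> x - \<psi> y\<bar> \<le> side_len Q powr (-1 - s/2) * dist x y"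
    and Psi_bounded: "\<And>x. \<bar>\<psi> x\<bar> \<le> 2 * A * side_len Q powr (- s/2)"
    and Psi_continuous: "continuous_on UNIV \<psi>"
    and Psi_integral: "integral\<^sup>L \<mu> \<psi> = 0"
proof -
  obtain L where L: "L < side_len Q powr (-1 - s/2)" "L-lipschitz_on UNIV \<psi>"
    using \<psi> by (auto simp: Psi_def)
  obtain K where K: "K \<subseteq> ball (centre Q) (A * side_len Q)" "\<And>x. x \<notin> K \<Longrightarrow> \<psi> x = 0"
    using \<psi> by (auto simp: Psi_def)
  show "integral\<^sup>L \<mu> \<psi> = 0" using \<psi> by (auto simp: Psi_def)
  show supp: "dist (centre Q) x < A * side_len Q" if "\<psi> x \<noteq> 0" for x
    using K that by force
  show lip: "\<bar>\<psi> x - \<psi> y\<bar> \<le> side_len Q powr (-1 - s/2) * dist x y" for x y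
  proof -
    have "\<bar>\<psi> x - \<psi> y\<bar> \<le> L * dist x y"
      using lipschitz_onD[OF L(2), of x y] by (simp add: dist_real_def)
    also have "\<dots> \<le> side_len Q powr (-1 - s/2) * dist x y"
      using L(1) by (intro mult_right_mono) auto
    finally show ?thesis .
  qed
  show "continuous_on UNIV \<psi>" using L(2) by (rule lipschitz_on_continuous_on)
  show "\<bar>\<psi> x\<bar> \<le> 2 * A * side_len Q powr (- s/2)" for x
  proof (cases "\<psi> x = 0")
    case True thus ?thesis using A by simp
  next
    case False
    define l where "l = side_len Q"
    have l: "l > 0" by (simp add: l_def side_len_pos)
    obtain i :: 'n where True by simp
    define z where "z = centre Q + (A * l) *\<^sub>R axis i 1"
    have dz: "dist (centre Q) z = A * l" using A l by (simp add: z_def dist_norm)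
    hence "\<psi> z = 0" using supp[of z] l_def by fastforce
    have "dist x z \<le> 2 * A * l"
      using dist_triangle[of x z "centre Q"] dz supp[OF False] by (simp add: dist_commute l_def)
    have "\<bar>\<psi> x\<bar> = \<bar>\<psi> x - \<psi> z\<bar>" using \<open>\<psi> z = 0\<close> by simp
    also have "\<dots> \<le> l powr (-1 - s/2) * (2 * A * l)"
      using lip[of x z] \<open>dist x z \<le> 2 * A * l\<close> by (simp add: l_def) (meson mult_left_mono order_trans powr_ge_zero)
    also have "\<dots> = 2 * A * (l powr (-1 - s/2) * l powr 1)" using l by simp
    also have "\<dots> = 2 * A * l powr (- s/2)" by (simp only: powr_add[symmetric]) simp
    finally show ?thesis by (simp add: l_def)
  qed
qed

lemma Psi_product_integrable:
  assumes nice: "nice_measure s \<Lambda> \<mu>" and A: "A > 0"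
    and \<psi>: "\<psi> \<in> Psi s \<mu> A Q" and \<phi>: "\<phi> \<in> Psi s \<mu> A R"
  shows "integrable \<mu> (\<lambda>x. \<psi> x * \<phi> x)"
proof (rule integrable_continuous_bounded_support[OF nice])
  show "continuous_on UNIV (\<lambda>x. \<psi> x * \<phi> x)"
    using Psi_continuous[OF \<psi> A] Psi_continuous[OF \<phi> A] by (intro continuous_intros)
  show "\<bar>\<psi> x * \<phi> x\<bar> \<le> (2 * A * side_len Q powr (- s/2)) * (2 * A * side_len R powr (- s/2))" for x
    unfolding abs_mult using Psi_bounded[OF \<psi> A, of x] Psi_bounded[OF \<phi> A, of x]
    by (intro mult_mono) auto
  show "dist (centre R) x < A * side_len R" if "\<psi> x * \<phi> x \<noteq> 0" for x
    using Psi_support[OF \<phi> A, of x] that by auto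
qed (use A side_len_pos[of R] in simp)

lemma Psi_inner_le:
  fixes \<psi> \<phi> :: "real^'n::finite \<Rightarrow> real"
  assumes nice: "nice_measure s \<Lambda> \<mu>" and A: "A > 0"
    and \<psi>: "\<psi> \<in> Psi s \<mu> A Q" and \<phi>: "\<phi> \<in> Psi s \<mu> A R"
  shows "\<bar>integral\<^sup>L \<mu> (\<lambda>x. \<psi> x * \<phi> x)\<bar>
     \<le> 2 * A\<^sup>2 * side_len Q powr (-1 - s/2) * side_len R powr (1 - s/2)
          * measure \<mu> (ball (centre R) (A * side_len R))"
proof -
  define lQ lR c where "lQ = side_len Q" and "lR = side_len R" and "c = centre R"
  have lQ: "lQ > 0" and lR: "lR > 0" by (auto simp: lQ_def lR_def side_len_pos)
  have int_\<phi>: "integrable \<mu> \<phi>"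
    using Psi_bounded[OF \<phi> A] Psi_support[OF \<phi> A] A lR
    by (intro integrable_continuous_bounded_support[OF nice Psi_continuous[OF \<phi> A],
          where r = "A * lR" and c = "centre R"]) (auto simp: lR_def)
  have int: "integrable \<mu> (\<lambda>x. \<psi> x * \<phi> x)" by (rule Psi_product_integrable[OF nice A \<psi> \<phi>])
  have recentre: "integral\<^sup>L \<mu> (\<lambda>x. \<psi> x * \<phi> x) = integral\<^sup>L \<mu> (\<lambda>x. (\<psi> x - \<psi> c) * \<phi> x)"
    using int int_\<phi> Psi_integral[OF \<phi> A] by (simp add: left_diff_distrib)
  define K where "K = lQ powr (-1 - s/2) * (A * lR) * (2 * A * lR powr (- s/2))"
  have pointwise: "\<bar>(\<psi> x - \<psi> c) * \<phi> x\<bar> \<le> K * indicator (ball c (A * lR)) x" for x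
  proof (cases "\<phi> x = 0")
    case True thus ?thesis using A lQ lR by (simp add: K_def indicator_def)
  next
    case False
    have d: "dist c x < A * lR" using Psi_support[OF \<phi> A False] by (simp add: c_def lR_def)
    have "\<bar>\<psi> x - \<psi> c\<bar> \<le> lQ powr (-1 - s/2) * dist x c"
      using Psi_lipschitz[OF \<psi> A] by (simp add: lQ_def)
    also have "\<dots> \<le> lQ powr (-1 - s/2) * (A * lR)"
      using d by (intro mult_left_mono) (auto simp: dist_commute)
    finally have "\<bar>(\<psi> x - \<psi> c) * \<phi> x\<bar> \<le> K" unfolding abs_mult K_def
      using Psi_bounded[OF \<phi> A, of x] A lR by (intro mult_mono) (auto simp: lR_def)
    thus ?thesis using d by simp
  qed
  have "\<bar>integral\<^sup>L \<mu> (\<lambda>x. (\<psi> x - \<psi> c) * \<phi> x)\<bar>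
      \<le> integral\<^sup>L \<mu> (\<lambda>x. K * indicator (ball c (A * lR)) x)"
    using int int_\<phi> integrable_ball_indicator[OF nice, of "A * lR" c] A lR pointwise
    by (intro integral_abs_bound_integral) (auto simp: left_diff_distrib)
  also have "\<dots> = K * measure \<mu> (ball c (A * lR))"
    using nice_measure_space[OF nice] by simp
  also have "K = 2 * A\<^sup>2 * lQ powr (-1 - s/2) * lR powr (1 - s/2)"
  proof -
    have "lR powr (1 - s/2) = lR * lR powr (- s/2)" using powr_add[of lR 1 "- s/2"] lR by simp
    thus ?thesis by (simp add: K_def power2_eq_square algebra_simps)
  qed
  finally show ?thesis unfolding recentre lQ_def lR_def c_def .
qed

lemma powr_gram_finer_eq:
  fixes l m s :: real assumes "l > 0" "m > 0"
  shows "l powr (-1 - s/2) * m powr (1 - s/2) * (m / l) powr (s/2) = l powr (-s) * (m / l)"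
proof -
  have "l powr (-1 - s/2) * m powr (1 - s/2) * (m / l) powr (s/2)
      = exp ((-1 - s/2) * ln l + (1 - s/2) * ln m + (s/2) * (ln m - ln l))"
    using assms by (simp add: powr_def ln_div exp_add)
  also have "\<dots> = exp ((-s) * ln l + (ln m - ln l))"
    by (intro arg_cong[where f = exp]) (simp add: field_simps)
  also have "\<dots> = l powr (-s) * (m / l)"
    using assms by (simp add: powr_def exp_add exp_diff exp_minus field_simps)
  finally show ?thesis .
qed

lemma powr_gram_coarser_eq:
  fixes l m a s :: real assumes "l > 0" "m > 0" "a > 0"
  shows "m powr (-1 - s/2) * l powr (1 - s/2) * (a * l) powr s * (m / l) powr (s/2)
           = a powr s * (l / m)"
proof -
  have "m powr (-1 - s/2) * l powr (1 - s/2) * (a * l) powr s * (m / l) powr (s/2)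
      = exp ((-1 - s/2) * ln m + (1 - s/2) * ln l + s * (ln a + ln l) + (s/2) * (ln m - ln l))"
    using assms by (simp add: powr_def ln_div ln_mult exp_add)
  also have "\<dots> = exp (s * ln a + (ln l - ln m))"
    by (intro arg_cong[where f = exp]) (simp add: field_simps)
  also have "\<dots> = a powr s * (l / m)"
    using assms by (simp add: powr_def exp_add exp_diff)
  finally show ?thesis .
qed

definition gram :: "(real^'n::finite) measure \<Rightarrow> ('n dyadic_index \<Rightarrow> real^'n \<Rightarrow> real)
   \<Rightarrow> 'n dyadic_index \<Rightarrow> 'n dyadic_index \<Rightarrow> real" where
  "gram \<mu> \<psi> Q R = integral\<^sup>L \<mu> (\<lambda>x. \<psi> Q x * \<psi> R x)"

lemma gram_sym: "gram \<mu> \<psi> Q R = gram \<mu> \<psi> R Q"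
  unfolding gram_def by (simp add: mult.commute)

lemma riesz_system_mono:
  assumes "riesz_system C \<mu> \<psi>" and "C \<le> C'"
  shows "riesz_system C' \<mu> \<psi>"
  unfolding riesz_system_def
proof (intro allI impI)
  fix a :: "'a dyadic_index \<Rightarrow> real" and F :: "'a dyadic_index set"
  assume sa: "(\<lambda>Q. (a Q)\<^sup>2) summable_on UNIV" and fin: "finite F"
  have "(\<integral>\<^sup>+ x. ennreal ((\<Sum>Q\<in>F. a Q * \<psi> Q x)\<^sup>2) \<partial>\<mu>) \<le> ennreal (C * (\<Sum>\<^sub>\<infinity>Q. (a Q)\<^sup>2))"
    using assms(1) sa fin unfolding riesz_system_def by blast
  also have "\<dots> \<le> ennreal (C' * (\<Sum>\<^sub>\<infinity>Q. (a Q)\<^sup>2))"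
    using assms(2) by (intro ennreal_leI mult_right_mono infsum_nonneg) auto
  finally show "(\<integral>\<^sup>+ x. ennreal ((\<Sum>Q\<in>F. a Q * \<psi> Q x)\<^sup>2) \<partial>\<mu>) \<le> ennreal (C' * (\<Sum>\<^sub>\<infinity>Q. (a Q)\<^sup>2))" .
qed

definition gram_row_bound :: "nat \<Rightarrow> real \<Rightarrow> real \<Rightarrow> real \<Rightarrow> real" where
  "gram_row_bound d s \<Lambda> A = 2 * \<Lambda> * A\<^sup>2 * (3 * A) powr s * (4 * A + 1) ^ d"

lemma gram_row_bound_le:
  fixes A s \<Lambda> :: real assumes A: "A \<ge> 1" and s: "s > 0" and \<Lambda>: "\<Lambda> > 0"
  shows "4 * gram_row_bound d s \<Lambda> A \<le> (8 * \<Lambda> * 3 powr s * 5 ^ d) * A powr (real d + 2 + 3 * s / 2)"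
proof -
  have A0: "A > 0" using A by simp
  have "(4 * A + 1) ^ d \<le> (5 * A) ^ d" using A by (intro power_mono) auto
  hence "4 * gram_row_bound d s \<Lambda> A \<le> 4 * (2 * \<Lambda> * A\<^sup>2 * (3 * A) powr s * (5 * A) ^ d)"
    unfolding gram_row_bound_def using \<Lambda> A0 by (intro mult_left_mono) auto
  also have "\<dots> = (8 * \<Lambda> * 3 powr s * 5 ^ d) * A powr (real d + 2 + s)"
    using A0 by (simp add: powr_mult powr_realpow powr_add algebra_simps)
  also have "\<dots> \<le> (8 * \<Lambda> * 3 powr s * 5 ^ d) * A powr (real d + 2 + 3 * s / 2)"
    using A s \<Lambda> by (intro mult_left_mono powr_mono) auto
  finally show ?thesis .
qed

context
  fixes s \<Lambda> A :: real and \<mu> :: "(real^'n::finite) measure"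
    and \<psi> :: "'n dyadic_index \<Rightarrow> real^'n \<Rightarrow> real"
  assumes nice: "nice_measure s \<Lambda> \<mu>" and \<Lambda>: "\<Lambda> > 0" and A: "A \<ge> 1" and s: "s > 0"
    and \<psi>: "\<And>Q. \<psi> Q \<in> Psi s \<mu> A Q"
begin

lemma gram_nonzero_dist:
  assumes "gram \<mu> \<psi> Q R \<noteq> 0"
  shows "dist (centre Q) (centre R) < A * side_len Q + A * side_len R"
proof -
  have "(\<lambda>x. \<psi> Q x * \<psi> R x) \<noteq> (\<lambda>x. 0)" using assms by (auto simp: gram_def)
  then obtain x where x: "\<psi> Q x \<noteq> 0" "\<psi> R x \<noteq> 0" by (metis mult_zero_left mult_zero_right)
  have A0: "A > 0" using A by simp
  show ?thesis
    using Psi_support[OF \<psi> A0 x(1)] Psi_support[OF \<psi> A0 x(2)]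
      dist_triangle[of "centre Q" "centre R" x] by (simp add: dist_commute)
qed

lemma gram_weighted_le_finer:
  "\<bar>gram \<mu> \<psi> Q R\<bar> * (side_len R / side_len Q) powr (s/2)
     \<le> 2 * A\<^sup>2 * side_len Q powr (-s) * (side_len R / side_len Q)
         * measure \<mu> (ball (centre R) (A * side_len R))"
proof -
  have "\<bar>gram \<mu> \<psi> Q R\<bar> * (side_len R / side_len Q) powr (s/2)
      \<le> 2 * A\<^sup>2 * side_len Q powr (-1 - s/2) * side_len R powr (1 - s/2)
          * measure \<mu> (ball (centre R) (A * side_len R)) * (side_len R / side_len Q) powr (s/2)"
    using Psi_inner_le[OF nice _ \<psi> \<psi>, of Q R] A unfolding gram_def
    by (intro mult_right_mono) auto
  also have "\<dots> = 2 * A\<^sup>2 * measure \<mu> (ball (centre R) (A * side_len R))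
      * (side_len Q powr (-1 - s/2) * side_len R powr (1 - s/2) * (side_len R / side_len Q) powr (s/2))"
    by (simp add: algebra_simps)
  also have "\<dots> = 2 * A\<^sup>2 * side_len Q powr (-s) * (side_len R / side_len Q)
         * measure \<mu> (ball (centre R) (A * side_len R))"
    unfolding powr_gram_finer_eq[OF side_len_pos side_len_pos] by (simp add: algebra_simps)
  finally show ?thesis .
qed

lemma gram_weighted_le_coarser:
  "\<bar>gram \<mu> \<psi> Q R\<bar> * (side_len R / side_len Q) powr (s/2)
     \<le> 2 * \<Lambda> * A\<^sup>2 * A powr s * (side_len Q / side_len R)"
proof -
  have A0: "A > 0" using A by simp
  have "measure \<mu> (ball (centre Q) (A * side_len Q)) \<le> \<Lambda> * (A * side_len Q) powr s"
    using nice_measure_ball_le[OF nice _ less_imp_le[OF \<Lambda>]] A0 side_len_pos[of Q] by simp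
  hence "\<bar>gram \<mu> \<psi> Q R\<bar> \<le> 2 * A\<^sup>2 * side_len R powr (-1 - s/2) * side_len Q powr (1 - s/2)
             * (\<Lambda> * (A * side_len Q) powr s)"
    using Psi_inner_le[OF nice A0 \<psi> \<psi>, of R Q] gram_sym[of \<mu> \<psi> Q R] unfolding gram_def
    by (smt (verit) mult_left_mono powr_ge_zero zero_le_mult_iff zero_le_power2)
  hence "\<bar>gram \<mu> \<psi> Q R\<bar> * (side_len R / side_len Q) powr (s/2)
      \<le> 2 * A\<^sup>2 * side_len R powr (-1 - s/2) * side_len Q powr (1 - s/2)
             * (\<Lambda> * (A * side_len Q) powr s) * (side_len R / side_len Q) powr (s/2)"
    by (rule mult_right_mono) simp
  also have "\<dots> = 2 * \<Lambda> * A\<^sup>2 * (side_len R powr (-1 - s/2) * side_len Q powr (1 - s/2)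
             * (A * side_len Q) powr s * (side_len R / side_len Q) powr (s/2))"
    by (simp add: algebra_simps)
  also have "\<dots> = 2 * \<Lambda> * A\<^sup>2 * A powr s * (side_len Q / side_len R)"
    unfolding powr_gram_coarser_eq[OF side_len_pos side_len_pos A0] by (simp add: algebra_simps)
  finally show ?thesis .
qed

lemma sum_measure_interacting_finer_balls_le:
  assumes fin: "finite S" and gen: "\<And>R. R \<in> S \<Longrightarrow> fst R = k" and k: "fst Q \<le> k"
  shows "(\<Sum>R\<in>{R\<in>S. gram \<mu> \<psi> Q R \<noteq> 0}. measure \<mu> (ball (centre R) (A * side_len R)))
           \<le> (2 * A + 1) ^ CARD('n) * (\<Lambda> * (3 * A * side_len Q) powr s)"
proof -
  have A0: "A > 0" using A by simp
  let ?l = "side_len Q"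
  have "(\<Sum>R\<in>{R\<in>S. gram \<mu> \<psi> Q R \<noteq> 0}. measure \<mu> (ball (centre R) (A * side_len R)))
      \<le> (2 * A + 1) ^ CARD('n) * measure \<mu> (ball (centre Q) (3 * A * ?l))"
  proof (rule sum_measure_generation_balls_le[OF nice])
    fix R assume R: "R \<in> {R\<in>S. gram \<mu> \<psi> Q R \<noteq> 0}"
    have "dist (centre Q) (centre R) < A * ?l + A * side_len R"
      using gram_nonzero_dist R by simp
    moreover have "A * side_len R \<le> A * ?l"
      using R gen k A0 by (simp add: side_len_le_iff)
    ultimately have near: "dist (centre Q) (centre R) + A * side_len R \<le> 3 * A * ?l"
      by (simp only: mult.assoc)
    show "ball (centre R) (A * side_len R) \<subseteq> ball (centre Q) (3 * A * ?l)"
    proof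
      fix y assume "y \<in> ball (centre R) (A * side_len R)"
      with near dist_triangle[of "centre Q" y "centre R"] show "y \<in> ball (centre Q) (3 * A * ?l)"
        by simp
    qed
  qed (use fin gen A0 side_len_pos[of Q] in auto)
  also have "\<dots> \<le> (2 * A + 1) ^ CARD('n) * (\<Lambda> * (3 * A * ?l) powr s)"
    using nice_measure_ball_le[OF nice _ less_imp_le[OF \<Lambda>], of "3 * A * ?l"] A0 side_len_pos[of Q]
    by (intro mult_left_mono) auto
  finally show ?thesis .
qed

lemma gram_generation_sum_finer:
  assumes fin: "finite S" and gen: "\<And>R. R \<in> S \<Longrightarrow> fst R = k" and k: "fst Q \<le> k"
  shows "(\<Sum>R\<in>S. \<bar>gram \<mu> \<psi> Q R\<bar> * (side_len R / side_len Q) powr (s/2))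
           \<le> gram_row_bound CARD('n) s \<Lambda> A * 2 powr (- \<bar>real_of_int (k - fst Q)\<bar>)"
proof -
  have A0: "A > 0" using A by simp
  define l t where "l = side_len Q" and "t = (2::real) powr (- \<bar>real_of_int (k - fst Q)\<bar>)"
  have l: "l > 0" by (simp add: l_def side_len_pos)
  have ratio: "side_len R / side_len Q = t" if "R \<in> S" for R
    using side_len_ratio[of R Q] gen[OF that] k by (simp add: t_def)
  define S' where "S' = {R\<in>S. gram \<mu> \<psi> Q R \<noteq> 0}"
  let ?m = "\<lambda>R. measure \<mu> (ball (centre R) (A * side_len R))"
  have "(\<Sum>R\<in>S. \<bar>gram \<mu> \<psi> Q R\<bar> * (side_len R / side_len Q) powr (s/2))
      = (\<Sum>R\<in>S'. \<bar>gram \<mu> \<psi> Q R\<bar> * (side_len R / side_len Q) powr (s/2))"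
    unfolding S'_def by (rule sum.mono_neutral_right) (use fin in auto)
  also have "\<dots> \<le> (\<Sum>R\<in>S'. 2 * A\<^sup>2 * l powr (-s) * t * ?m R)"
  proof (rule sum_mono)
    fix R assume "R \<in> S'"
    hence "side_len R / side_len Q = t" using ratio by (simp add: S'_def)
    thus "\<bar>gram \<mu> \<psi> Q R\<bar> * (side_len R / side_len Q) powr (s/2) \<le> 2 * A\<^sup>2 * l powr (-s) * t * ?m R"
      using gram_weighted_le_finer[of Q R] unfolding l_def by metis
  qed
  also have "\<dots> = 2 * A\<^sup>2 * l powr (-s) * t * (\<Sum>R\<in>S'. ?m R)" by (simp add: sum_distrib_left)
  also have "\<dots> \<le> 2 * A\<^sup>2 * l powr (-s) * t * ((2 * A + 1) ^ CARD('n) * (\<Lambda> * (3 * A * l) powr s))"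
    using sum_measure_interacting_finer_balls_le[OF fin gen k] unfolding S'_def l_def t_def
    by (intro mult_left_mono) auto
  also have "\<dots> = 2 * \<Lambda> * A\<^sup>2 * (l powr (-s) * (3 * A * l) powr s) * (2 * A + 1) ^ CARD('n) * t"
    by (simp add: algebra_simps)
  also have "l powr (-s) * (3 * A * l) powr s = (3 * A) powr s"
    using l A0 by (simp add: powr_mult powr_minus)
  also have "2 * \<Lambda> * A\<^sup>2 * (3 * A) powr s * (2 * A + 1) ^ CARD('n) * t
      \<le> gram_row_bound CARD('n) s \<Lambda> A * t"
    unfolding gram_row_bound_def t_def using A0 \<Lambda>
    by (intro mult_right_mono mult_left_mono power_mono) auto
  finally show ?thesis unfolding t_def .
qed

lemma card_interacting_coarser_le:
  assumes gen: "\<And>R. R \<in> S \<Longrightarrow> fst R = k" and k: "k \<le> fst Q"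
  shows "real (card {R\<in>S. gram \<mu> \<psi> Q R \<noteq> 0}) \<le> (4 * A + 1) ^ CARD('n)"
proof -
  have A0: "A > 0" using A by simp
  have "real (card {R\<in>S. gram \<mu> \<psi> Q R \<noteq> 0}) \<le> (2 * (2 * A) + 1) ^ CARD('n)"
  proof (rule dyadic_generation_near_point[where k = k and x = "centre Q"])
    fix R assume R: "R \<in> {R\<in>S. gram \<mu> \<psi> Q R \<noteq> 0}"
    have "dist (centre Q) (centre R) < A * side_len Q + A * side_len R"
      using gram_nonzero_dist R by simp
    moreover have "side_len Q \<le> side_len R" using R gen k by (simp add: side_len_le_iff)
    moreover have "side_len R = 2 powr (- real_of_int k)"
      using gen R by (simp add: side_len_def)
    ultimately show "fst R = k \<and> dist (centre R) (centre Q) < 2 * A * 2 powr (- real_of_int k)"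
      using gen R A0 by (auto simp: dist_commute intro: order.strict_trans2)
  qed (use A0 in simp)
  thus ?thesis by simp
qed

lemma gram_generation_sum_coarser:
  assumes fin: "finite S" and gen: "\<And>R. R \<in> S \<Longrightarrow> fst R = k" and k: "k < fst Q"
  shows "(\<Sum>R\<in>S. \<bar>gram \<mu> \<psi> Q R\<bar> * (side_len R / side_len Q) powr (s/2))
           \<le> gram_row_bound CARD('n) s \<Lambda> A * 2 powr (- \<bar>real_of_int (k - fst Q)\<bar>)"
proof -
  have A0: "A > 0" using A by simp
  define u where "u = (2::real) powr (- \<bar>real_of_int (k - fst Q)\<bar>)"
  have ratio: "side_len Q / side_len R = u" if "R \<in> S" for R
    using side_len_ratio[of Q R] gen[OF that] k by (simp add: u_def)
  define S' where "S' = {R\<in>S. gram \<mu> \<psi> Q R \<noteq> 0}"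
  have "(\<Sum>R\<in>S. \<bar>gram \<mu> \<psi> Q R\<bar> * (side_len R / side_len Q) powr (s/2))
      = (\<Sum>R\<in>S'. \<bar>gram \<mu> \<psi> Q R\<bar> * (side_len R / side_len Q) powr (s/2))"
    unfolding S'_def by (rule sum.mono_neutral_right) (use fin in auto)
  also have "\<dots> \<le> real (card S') * (2 * \<Lambda> * A\<^sup>2 * A powr s * u)"
  proof (rule sum_bounded_above)
    fix R assume "R \<in> S'"
    hence "side_len Q / side_len R = u" using ratio by (simp add: S'_def)
    thus "\<bar>gram \<mu> \<psi> Q R\<bar> * (side_len R / side_len Q) powr (s/2) \<le> 2 * \<Lambda> * A\<^sup>2 * A powr s * u"
      using gram_weighted_le_coarser[of Q R] by metis
  qed
  also have "\<dots> \<le> (4 * A + 1) ^ CARD('n) * (2 * \<Lambda> * A\<^sup>2 * (3 * A) powr s * u)"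
    using card_interacting_coarser_le[OF gen] k \<Lambda> A0 s unfolding S'_def u_def
    by (intro mult_mono mult_right_mono mult_left_mono powr_mono2) auto
  also have "\<dots> = gram_row_bound CARD('n) s \<Lambda> A * u"
    by (simp add: gram_row_bound_def algebra_simps)
  finally show ?thesis unfolding u_def .
qed

lemma gram_row_sum_le:
  assumes fin: "finite F"
  shows "(\<Sum>R\<in>F. \<bar>gram \<mu> \<psi> Q R\<bar> * (side_len R / side_len Q) powr (s/2))
           \<le> 4 * gram_row_bound CARD('n) s \<Lambda> A"
proof -
  let ?f = "\<lambda>R. \<bar>gram \<mu> \<psi> Q R\<bar> * (side_len R / side_len Q) powr (s/2)"
  let ?M = "gram_row_bound CARD('n) s \<Lambda> A"
  have "sum ?f F = (\<Sum>k\<in>fst ` F. \<Sum>R\<in>{R\<in>F. fst R = k}. ?f R)"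
    by (rule sum.group[symmetric]) (use fin in auto)
  also have "\<dots> \<le> (\<Sum>k\<in>fst ` F. ?M * 2 powr (- \<bar>real_of_int (k - fst Q)\<bar>))"
  proof (rule sum_mono)
    fix k
    show "(\<Sum>R\<in>{R\<in>F. fst R = k}. ?f R) \<le> ?M * 2 powr (- \<bar>real_of_int (k - fst Q)\<bar>)"
    proof (cases "fst Q \<le> k")
      case True thus ?thesis using fin by (intro gram_generation_sum_finer) auto
    next
      case False thus ?thesis using fin by (intro gram_generation_sum_coarser) auto
    qed
  qed
  also have "\<dots> = ?M * (\<Sum>k\<in>fst ` F. 2 powr (- \<bar>real_of_int (k - fst Q)\<bar>))"
    by (simp add: sum_distrib_left)
  also have "\<dots> \<le> ?M * 4"
    using sum_two_powr_neg_abs_diff_le[of "fst ` F" "fst Q"] fin A \<Lambda>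
    by (intro mult_left_mono) (auto simp: gram_row_bound_def)
  finally show ?thesis by simp
qed

lemma integrable_square_sum: "integrable \<mu> (\<lambda>x. (\<Sum>Q\<in>F. a Q * \<psi> Q x)\<^sup>2)"
  using Psi_product_integrable[OF nice _ \<psi> \<psi>] A
  by (simp add: power2_eq_square sum_product algebra_simps)

lemma integral_square_sum_le:
  assumes fin: "finite F"
  shows "integral\<^sup>L \<mu> (\<lambda>x. (\<Sum>Q\<in>F. a Q * \<psi> Q x)\<^sup>2) \<le> 4 * gram_row_bound CARD('n) s \<Lambda> A * (\<Sum>Q\<in>F. (a Q)\<^sup>2)"
proof -
  have "integral\<^sup>L \<mu> (\<lambda>x. (\<Sum>Q\<in>F. a Q * \<psi> Q x)\<^sup>2) = (\<Sum>Q\<in>F. \<Sum>R\<in>F. a Q * a R * gram \<mu> \<psi> Q R)"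
    using Psi_product_integrable[OF nice _ \<psi> \<psi>] A
    by (simp add: power2_eq_square sum_product algebra_simps gram_def)
  also have "\<dots> \<le> 4 * gram_row_bound CARD('n) s \<Lambda> A * (\<Sum>Q\<in>F. (a Q)\<^sup>2)"
  proof (rule schur_test[OF fin gram_sym, where h = "\<lambda>Q. side_len Q powr (s/2)"])
    show "(\<Sum>R\<in>F. \<bar>gram \<mu> \<psi> Q R\<bar> * (side_len R powr (s/2) / side_len Q powr (s/2)))
          \<le> 4 * gram_row_bound CARD('n) s \<Lambda> A" for Q
      using gram_row_sum_le[OF fin, of Q] by (simp add: powr_divide)
  qed (metis side_len_pos powr_gt_zero order_less_irrefl)
  finally show ?thesis .
qed

lemma riesz_system_gram_row_bound: "riesz_system (4 * gram_row_bound CARD('n) s \<Lambda> A) \<mu> \<psi>"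
  unfolding riesz_system_def
proof (intro allI impI)
  fix a :: "'n dyadic_index \<Rightarrow> real" and F :: "'n dyadic_index set"
  assume sa: "(\<lambda>Q. (a Q)\<^sup>2) summable_on UNIV" and fin: "finite F"
  let ?C = "4 * gram_row_bound CARD('n) s \<Lambda> A"
  have "(\<integral>\<^sup>+ x. ennreal ((\<Sum>Q\<in>F. a Q * \<psi> Q x)\<^sup>2) \<partial>\<mu>)
      = ennreal (integral\<^sup>L \<mu> (\<lambda>x. (\<Sum>Q\<in>F. a Q * \<psi> Q x)\<^sup>2))"
    by (rule nn_integral_eq_integral[OF integrable_square_sum]) auto
  also have "\<dots> \<le> ennreal (?C * (\<Sum>Q\<in>F. (a Q)\<^sup>2))"
    by (intro ennreal_leI integral_square_sum_le[OF fin])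
  also have "\<dots> \<le> ennreal (?C * (\<Sum>\<^sub>\<infinity>Q. (a Q)\<^sup>2))"
    using finite_sum_le_infsum[OF sa fin] A \<Lambda>
    by (intro ennreal_leI mult_left_mono) (auto simp: gram_row_bound_def)
  finally show "(\<integral>\<^sup>+ x. ennreal ((\<Sum>Q\<in>F. a Q * \<psi> Q x)\<^sup>2) \<partial>\<mu>) \<le> ennreal (?C * (\<Sum>\<^sub>\<infinity>Q. (a Q)\<^sup>2))" .
qed

end

theorem lemma5p1:
  fixes s \<Lambda> :: real
  assumes "CARD('n::finite) \<ge> 2"
    and "0 < s" and "s < real CARD('n)"
    and "\<Lambda> > 0"
  shows "\<exists>C5>0. \<forall>(\<mu> :: (real^'n) measure) A.
           nice_measure s \<Lambda> \<mu> \<and> A > 10 * sqrt (real CARD('n)) \<longrightarrow>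
           riesz_family (C5 * A powr (real CARD('n) + 2 + 3 * s / 2)) \<mu> (Psi s \<mu> A)"
proof (intro exI[of _ "8 * \<Lambda> * 3 powr s * 5 ^ CARD('n)"] conjI allI impI)
  show "8 * \<Lambda> * 3 powr s * 5 ^ CARD('n) > 0" using assms(4) by simp
  fix \<mu> :: "(real^'n) measure" and A :: real
  assume h: "nice_measure s \<Lambda> \<mu> \<and> A > 10 * sqrt (real CARD('n))"
  have "sqrt (real CARD('n)) \<ge> 1" by simp
  hence A: "A \<ge> 1" using h by linarith
  show "riesz_family (8 * \<Lambda> * 3 powr s * 5 ^ CARD('n) * A powr (real CARD('n) + 2 + 3 * s / 2))
          \<mu> (Psi s \<mu> A)"
    unfolding riesz_family_def
  proof (intro allI impI)
    fix \<psi> assume \<psi>: "\<forall>Q. \<psi> Q \<in> Psi s \<mu> A Q"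
    have "riesz_system (4 * gram_row_bound CARD('n) s \<Lambda> A) \<mu> \<psi>"
      using \<psi> by (intro riesz_system_gram_row_bound[OF conjunct1[OF h] assms(4) A assms(2)]) blast
    thus "riesz_system (8 * \<Lambda> * 3 powr s * 5 ^ CARD('n) * A powr (real CARD('n) + 2 + 3 * s / 2)) \<mu> \<psi>"
      using gram_row_bound_le[OF A assms(2,4)] by (rule riesz_system_mono)
  qed
qed

end
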